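(* Let $M\ge1$, $N\ge0$, let $\{m\}=(m_0,\dots,m_{M-1})$ with $\sum m_k=N+1$ and $\{n\}=(n_0,\dots,n_{M-1})$ with $\sum n_k=N$ be tuples of nonnegative integers with associated partitions $\mu$ ($N+1$ parts) and $\lambda$ ($N$ parts). For nonzero $v\in\mathbb{C}$ with $v^{-2}\neq\beta$, put $z=(v^{-2}-\beta)^{-1}$. Then $$\langle\{m\}|(v^{-1}-\beta v)^{1-M}\mathcal{B}(v)|\{n\}\rangle=G_{\mu/\lambda}(z;\beta),\qquad \langle\{n\}|(v^{-1}-\beta v)^{1-M}\mathcal{C}(v)|\{m\}\rangle=G_{\mu^\vee/\lambda^\vee}(z;\beta),$$ where $\lambda^\vee_j=M-1-\lambda_{N+1-j}$ ($1\le j\le N$) and $\mu^\vee_j=M-1-\mu_{N+2-j}$ ($1\le j\le N+1$).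
   Context: Non-Hermitian phase model: $\beta\in\mathbb{C}$ is a parameter. $\mathcal{F}$ is the bosonic Fock space with orthonormal basis $|n\rangle$, $n=0,1,2,\dots$; $\phi|n\rangle=|n-1\rangle$ ($\phi|0\rangle=0$), $\phi^\dagger|n\rangle=|n+1\rangle$, $\pi|n\rangle=\delta_{n,0}|n\rangle$. Sites are labelled $0,\dots,M-1$ with Fock spaces $\mathcal{F}_0,\dots,\mathcal{F}_{M-1}$; $\phi_j,\phi_j^\dagger,\pi_j$ act on $\mathcal{F}_j$. With $W_a=\mathbb{C}^2$, basis $|0\rangle_a,|1\rangle_a$, the $L$-operator on $W_a\otimes\mathcal{F}_j$ is $$\mathcal{L}_{aj}(v)=|0\rangle\langle0|_a\otimes(v^{-1}-\beta v\pi_j)+|0\rangle\langle1|_a\otimes\phi_j^\dagger+|1\rangle\langle0|_a\otimes\phi_j+|1\rangle\langle1|_a\otimes v,$$ i.e. the $2\times2$ matrix $\begin{pmatrix}v^{-1}-\beta v\pi_j&\phi_j^\dagger\\ \phi_j&v\end{pmatrix}$. The monodromy matrix is $\mathcal{T}_a(v)=\mathcal{L}_{a,M-1}(v)\cdots\mathcal{L}_{a,0}(v)=\begin{pmatrix}\mathcal{A}(v)&\mathcal{B}(v)\\ \mathcal{C}(v)&\mathcal{D}(v)\end{pmatrix}$, so $\mathcal{B}(v)={}_a\langle0|\mathcal{T}_a(v)|1\rangle_a$, $\mathcal{C}(v)={}_a\langle1|\mathcal{T}_a(v)|0\rangle_a$. For $\{n\}=(n_0,\dots,n_{M-1})$,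 $|\{n\}\rangle=\otimes_{j=0}^{M-1}|n_j\rangle_j$ and $\langle\{n\}|$ its dual. The partition associated with $\{n\}$ (with $\sum n_k=N$) is the weakly decreasing length-$N$ sequence $\lambda=((M-1)^{n_{M-1}},\dots,1^{n_1},0^{n_0})$. For $\mu$ with $N+1$ entries and $\lambda$ with $N$ entries, $|\lambda|=\sum\lambda_j$ and $G_{\mu/\lambda}(z;\beta)=z^{|\mu|-|\lambda|}\prod_{j=1}^N(1+\beta z-\beta z\,\delta_{\mu_{j+1},\lambda_j})$ if $\mu_j\ge\lambda_j\ge\mu_{j+1}$ for all $1\le j\le N$, and $0$ otherwise. *)

theory Defs
  imports Complex_Main
begin

text \<open>Single-site Fock space operators, given by their matrix elements
  <m| X |n> in the orthonormal basis |n>, n = 0,1,2,...\<close>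

definition phi_me :: "nat \<Rightarrow> nat \<Rightarrow> complex" where
  "phi_me m n = (if n = m + 1 then 1 else 0)"

definition phid_me :: "nat \<Rightarrow> nat \<Rightarrow> complex" where
  "phid_me m n = (if m = n + 1 then 1 else 0)"

definition pi_me :: "nat \<Rightarrow> nat \<Rightarrow> complex" where
  "pi_me m n = (if m = n \<and> n = 0 then 1 else 0)"

definition id_me :: "nat \<Rightarrow> nat \<Rightarrow> complex" where
  "id_me m n = (if m = n then 1 else 0)"

text \<open>Matrix elements <m| (L(v))_{a b} |n> of the entries of the L-operator;
  auxiliary indices a, b \<in> {0,1}.\<close>

definition L_me :: "complex \<Rightarrow> complex \<Rightarrow> nat \<Rightarrow> nat \<Rightarrow> nat \<Rightarrow> nat \<Rightarrow> complex" where
  "L_me \<beta> v a b m n =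
     (if a = 0 \<and> b = 0 then inverse v * id_me m n - \<beta> * v * pi_me m n
      else if a = 0 \<and> b = 1 then phid_me m n
      else if a = 1 \<and> b = 0 then phi_me m n
      else v * id_me m n)"

text \<open>Matrix elements of the partial monodromy matrix L_{k-1}(v) ... L_0(v)
  between product states <ms| and |ns> (site j has occupation ms!j, ns!j).
  Since the L-operators at different sites act on different tensor factors,
  <{m}| T_{ab} |{n}> = sum over internal auxiliary indices of products of
  single-site matrix elements.\<close>

fun mono_me :: "complex \<Rightarrow> complex \<Rightarrow> nat list \<Rightarrow> nat list \<Rightarrow> nat \<Rightarrow> nat \<Rightarrow> nat \<Rightarrow> complex" where
  "mono_me \<beta> v ms ns 0 a b = (if a = b then 1 else 0)"
| "mono_me \<beta> v ms ns (Suc k) a b =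
     (\<Sum>c\<in>{0,1}. L_me \<beta> v a c (ms ! k) (ns ! k) * mono_me \<beta> v ms ns k c b)"

definition B_me :: "complex \<Rightarrow> complex \<Rightarrow> nat list \<Rightarrow> nat list \<Rightarrow> complex" where
  "B_me \<beta> v ms ns = mono_me \<beta> v ms ns (length ms) 0 1"

definition C_me :: "complex \<Rightarrow> complex \<Rightarrow> nat list \<Rightarrow> nat list \<Rightarrow> complex" where
  "C_me \<beta> v ms ns = mono_me \<beta> v ms ns (length ms) 1 0"

text \<open>Partition associated with occupation numbers ns = (n_0,...,n_{M-1}):
  ((M-1)^{n_{M-1}}, ..., 1^{n_1}, 0^{n_0}); entry lambda_j is (partition ns) ! (j-1).\<close>

definition partition_of :: "nat list \<Rightarrow> nat list" where
  "partition_of ns = concat (map (\<lambda>k. replicate (ns ! k) k) (rev [0..<length ns]))"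

definition dual_part :: "nat \<Rightarrow> nat list \<Rightarrow> nat list" where
  "dual_part M lam = rev (map (\<lambda>x. M - 1 - x) lam)"

text \<open>G_{mu/lam}(z;beta), mu with N+1 entries, lam with N entries (1-indexed in the paper).\<close>

definition G_skew :: "nat list \<Rightarrow> nat list \<Rightarrow> complex \<Rightarrow> complex \<Rightarrow> complex" where
  "G_skew mu lam z \<beta> =
     (if (\<forall>j\<in>{1..length lam}. mu ! (j-1) \<ge> lam ! (j-1) \<and> lam ! (j-1) \<ge> mu ! j)
      then z powi (int (sum_list mu) - int (sum_list lam)) *
           (\<Prod>j=1..length lam. 1 + \<beta> * z - \<beta> * z * (if mu ! j = lam ! (j-1) then 1 else 0))
      else 0)"

end

theory Submission
  imports Defs
begin

text \<open>Adding a site K to the monodromy matrix prepends m copies of K to the partition of the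
  bra and n copies to that of the ket. Normalising by x = 1/v - \<beta> v, the four entries of the
  new L-operator carry exactly the weights 1, 1 + \<beta> z, z and z (1 + \<beta> z) by which the
  one-row branching rule for G changes when such blocks of equal parts are prepended. Hence,
  by induction on the number of sites, B is the skew function G_{\<mu>/\<lambda>} and D is G with an extra
  largest part K. Transposing every L-operator turns C into B on the reversed chain, and
  reversing the occupation numbers dualises the partitions.\<close>

lemma L_me_transpose: "L_me \<beta> v a c m n = L_me \<beta> v c a n m"
  by (auto simp: L_me_def id_me_def pi_me_def phi_me_def phid_me_def)

lemma mono_me_append:
  "k \<le> length ms \<Longrightarrow> k \<le> length ns \<Longrightarrow>
   mono_me \<beta> v (ms @ ms') (ns @ ns') k a b = mono_me \<beta> v ms ns k a b"
  by (induction k arbitrary: a) (auto simp: nth_append)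

lemma mono_me_snoc:
  "length ms = k \<Longrightarrow> length ns = k \<Longrightarrow>
   mono_me \<beta> v (ms @ [m]) (ns @ [n]) (Suc k) a b =
     (\<Sum>c\<in>{0,1}. L_me \<beta> v a c m n * mono_me \<beta> v ms ns k c b)"
  by (simp add: mono_me_append nth_append)

lemma mono_me_Suc_Cons:
  assumes "a \<le> 1" and "b \<le> 1"
  shows "mono_me \<beta> v (m # ms) (n # ns) (Suc k) a b =
     (\<Sum>c\<in>{0,1}. mono_me \<beta> v ms ns k a c * L_me \<beta> v c b m n)"
  using assms(1)
proof (induction k arbitrary: a)
  case 0
  then show ?case using assms(2) by (cases a; cases b) auto
next
  case (Suc k)
  have "mono_me \<beta> v (m # ms) (n # ns) (Suc (Suc k)) a b =
     (\<Sum>c\<in>{0,1}. L_me \<beta> v a c (ms ! k) (ns ! k) *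
       (\<Sum>d\<in>{0,1}. mono_me \<beta> v ms ns k c d * L_me \<beta> v d b m n))"
    using Suc.IH[of 0] Suc.IH[of 1] by simp
  also have "\<dots> = (\<Sum>d\<in>{0,1}. mono_me \<beta> v ms ns (Suc k) a d * L_me \<beta> v d b m n)"
    by (simp add: algebra_simps)
  finally show ?case .
qed

lemma mono_me_transpose:
  "k \<le> length ms \<Longrightarrow> k \<le> length ns \<Longrightarrow> a \<le> 1 \<Longrightarrow> b \<le> 1 \<Longrightarrow>
   mono_me \<beta> v ns ms k a b = mono_me \<beta> v (rev (take k ms)) (rev (take k ns)) k b a"
proof (induction k arbitrary: a b)
  case 0
  then show ?case by simp
next
  case (Suc k)
  then have take_Suc: "rev (take (Suc k) ms) = ms ! k # rev (take k ms)"
      "rev (take (Suc k) ns) = ns ! k # rev (take k ns)"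
    by (simp_all add: take_Suc_conv_app_nth)
  have "mono_me \<beta> v ns ms (Suc k) a b =
     (\<Sum>c\<in>{0,1}. mono_me \<beta> v (rev (take k ms)) (rev (take k ns)) k b c *
        L_me \<beta> v c a (ms ! k) (ns ! k))"
    using Suc.IH[of 0 b] Suc.IH[of 1 b] Suc.prems by (simp add: L_me_transpose[of _ _ a])
  also have "\<dots> = mono_me \<beta> v (rev (take (Suc k) ms)) (rev (take (Suc k) ns)) (Suc k) b a"
    unfolding take_Suc using Suc.prems by (simp only: mono_me_Suc_Cons)
  finally show ?case .
qed

lemma C_me_eq_B_me_rev: "length ns = length ms \<Longrightarrow> C_me \<beta> v ns ms = B_me \<beta> v (rev ms) (rev ns)"
  unfolding C_me_def B_me_def by (subst mono_me_transpose) auto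

lemma partition_of_Nil [simp]: "partition_of [] = []"
  by (simp add: partition_of_def)

lemma partition_of_snoc: "partition_of (ms @ [m]) = replicate m (length ms) @ partition_of ms"
proof -
  have "map (\<lambda>k. replicate ((ms @ [m]) ! k) k) (rev [0..<length ms])
      = map (\<lambda>k. replicate (ms ! k) k) (rev [0..<length ms])"
    by (rule map_cong) (auto simp: nth_append)
  moreover have "rev [0..<Suc (length ms)] = length ms # rev [0..<length ms]" by simp
  ultimately show ?thesis
    unfolding partition_of_def by (simp only: length_append_singleton list.map concat.simps) simp
qed

lemma length_partition_of: "length (partition_of ms) = sum_list ms"
  by (induction ms rule: rev_induct) (simp_all add: partition_of_snoc)

lemma partition_of_less: "k \<in> set (partition_of ms) \<Longrightarrow> k < length ms"
  by (induction ms rule: rev_induct) (auto simp: partition_of_snoc)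

lemma partition_of_Cons: "partition_of (m # ms) = map Suc (partition_of ms) @ replicate m 0"
proof (induction ms rule: rev_induct)
  case Nil
  then show ?case using partition_of_snoc[of "[]" m] by simp
next
  case (snoc k ms)
  then show ?case using partition_of_snoc[of "m # ms" k] partition_of_snoc[of ms k] by simp
qed

lemma dual_part_partition_of: "dual_part (length ms) (partition_of ms) = partition_of (rev ms)"
proof (induction ms)
  case Nil
  then show ?case by (simp add: dual_part_def)
next
  case (Cons m ms)
  have "dual_part (length (m # ms)) (partition_of (m # ms))
      = replicate m (length ms) @ dual_part (length ms) (partition_of ms)"
    by (simp add: dual_part_def partition_of_Cons rev_map comp_def)
  then show ?case using Cons by (simp add: partition_of_snoc)
qed

lemma ball_atLeast1_atMost_eq: "(\<forall>j\<in>{Suc 0..n}. P j) \<longleftrightarrow> (\<forall>i<n. P (Suc i))"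
  unfolding One_nat_def[symmetric] image_Suc_lessThan[symmetric] by auto

lemma G_skew_Cons_Cons:
  assumes "z \<noteq> 0"
  shows "G_skew (a # b # mu) (c # lam) z \<beta> =
    (if b \<le> c \<and> c \<le> a
     then z ^ (a - c) * (if b = c then 1 else 1 + \<beta> * z) * G_skew (b # mu) lam z \<beta> else 0)"
proof -
  define Q where "Q = (\<forall>i<length lam. lam ! i \<le> (b # mu) ! i \<and> mu ! i \<le> lam ! i)"
  define P where "P = (\<Prod>i<length lam. 1 + \<beta> * z - \<beta> * z * (if mu ! i = lam ! i then 1 else 0))"
  define E where "E = int (sum_list (b # mu)) - int (sum_list lam)"
  have weight: "1 + \<beta> * z - \<beta> * z * (if b = c then 1 else 0) = (if b = c then 1 else 1 + \<beta> * z)"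
    by simp
  have pow: "z powi (int (sum_list (a # b # mu)) - int (sum_list (c # lam))) = z ^ (a - c) * z powi E"
    if "c \<le> a"
  proof -
    have "int (sum_list (a # b # mu)) - int (sum_list (c # lam)) = int (a - c) + E"
      using that by (simp add: E_def)
    then show ?thesis using assms by (metis power_int_add power_int_of_nat)
  qed
  have unfold_Cons_Cons: "G_skew (a # b # mu) (c # lam) z \<beta> =
    (if (b \<le> c \<and> c \<le> a) \<and> Q
     then z powi (int (sum_list (a # b # mu)) - int (sum_list (c # lam))) *
       ((if b = c then 1 else 1 + \<beta> * z) * P) else 0)"
    unfolding G_skew_def One_nat_def ball_atLeast1_atMost_eq prod.atLeast1_atMost_eq
    by (simp only: length_Cons All_less_Suc2 prod.lessThan_Suc_shift nth_Cons_Suc nth_Cons_0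
        diff_Suc_Suc minus_nat.diff_0 weight flip: Q_def P_def) (simp only: conj_commute)
  have unfold_tail: "G_skew (b # mu) lam z \<beta> = (if Q then z powi E * P else 0)"
    unfolding G_skew_def One_nat_def ball_atLeast1_atMost_eq prod.atLeast1_atMost_eq
    by (simp only: nth_Cons_Suc diff_Suc_Suc minus_nat.diff_0 flip: Q_def P_def E_def)
  show ?thesis
  proof (cases "b \<le> c \<and> c \<le> a")
    case True
    then show ?thesis
      unfolding unfold_Cons_Cons unfold_tail pow[OF conjunct2[OF True]] by (cases Q) (simp_all add: mult_ac)
  next
    case False
    then show ?thesis unfolding unfold_Cons_Cons by (simp only: False simp_thms if_False)
  qed
qed

text \<open>Unlike G_skew, it vanishes
  unless length mu = length lam + 1, which makes the transfer-matrix induction below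
  independent of particle-number conservation.\<close>

fun G_rec :: "complex \<Rightarrow> complex \<Rightarrow> nat list \<Rightarrow> nat list \<Rightarrow> complex" where
  "G_rec z \<beta> [a] [] = z ^ a"
| "G_rec z \<beta> (a # b # mu) (c # lam) =
     (if b \<le> c \<and> c \<le> a
      then z ^ (a - c) * (if b = c then 1 else 1 + \<beta> * z) * G_rec z \<beta> (b # mu) lam else 0)"
| "G_rec z \<beta> _ _ = 0"

lemma G_skew_eq_G_rec:
  assumes "z \<noteq> 0" and "length mu = Suc (length lam)"
  shows "G_skew mu lam z \<beta> = G_rec z \<beta> mu lam"
  using assms(2)
proof (induction lam arbitrary: mu)
  case Nil
  then obtain a where "mu = [a]" by (cases mu) auto
  then show ?case by (simp add: G_skew_def)
next
  case (Cons c lam)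
  then obtain a b mu' where mu: "mu = a # b # mu'" by (cases mu; cases "tl mu") auto
  with Cons.prems have "G_skew (b # mu') lam z \<beta> = G_rec z \<beta> (b # mu') lam"
    by (intro Cons.IH) simp
  then show ?case by (simp only: mu G_skew_Cons_Cons[OF assms(1)] G_rec.simps)
qed

lemma G_rec_eq_0_if_length: "length mu \<noteq> Suc (length lam) \<Longrightarrow> G_rec z \<beta> mu lam = 0"
  by (induction z \<beta> mu lam rule: G_rec.induct) auto

lemma G_rec_Suc_Cons:
  "lam = [] \<or> hd lam \<le> a \<Longrightarrow> G_rec z \<beta> (Suc a # mu) lam = z * G_rec z \<beta> (a # mu) lam"
  by (cases mu; cases lam) (auto simp: Suc_diff_le)

lemma G_rec_replicate_Cons:
  assumes "a \<le> K"
  shows "G_rec z \<beta> (replicate n K @ a # mu) (replicate n K @ lam) =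
    (if n = 0 \<or> a = K then 1 else 1 + \<beta> * z) * G_rec z \<beta> (a # mu) lam"
proof (induction n)
  case 0
  then show ?case by simp
next
  case (Suc n)
  then show ?case using assms by (cases n) auto
qed

lemma G_rec_replicate:
  assumes "\<forall>a\<in>set mu. a < K" and "\<forall>c\<in>set lam. c < K"
  shows "G_rec z \<beta> (replicate p K @ mu) (replicate n K @ lam) =
    (if p = n then (if n = 0 then 1 else 1 + \<beta> * z) * G_rec z \<beta> mu lam
     else if p = Suc n then G_rec z \<beta> (K # mu) lam else 0)"
proof -
  consider "p = n" | "p = Suc n" | j where "p = n + Suc (Suc j)" | j where "n = p + Suc j"
    by (metis add_Suc_right less_imp_Suc_add linorder_neqE_nat not_less_eq)
  then show ?thesis
  proof cases
    case 1
    then show ?thesis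
    proof (cases mu)
      case Nil
      then show ?thesis using 1 by (simp add: G_rec_eq_0_if_length)
    next
      case (Cons a mu')
      then show ?thesis using 1 assms(1) G_rec_replicate_Cons[of a K z \<beta> n] by simp
    qed
  next
    case 2
    then have "replicate p K @ mu = replicate n K @ K # mu"
      by (simp add: replicate_app_Cons_same)
    then show ?thesis using 2 G_rec_replicate_Cons[of K K z \<beta> n] by simp
  next
    case (3 j)
    then have "replicate p K @ mu = replicate n K @ K # K # replicate j K @ mu"
      by (metis append.assoc append_Cons replicate_Suc replicate_add)
    moreover have "G_rec z \<beta> (K # K # replicate j K @ mu) lam = 0"
      using assms(2) by (cases lam) auto
    ultimately show ?thesis using 3 G_rec_replicate_Cons[of K K z \<beta> n] by simp
  next
    case (4 j)
    then have "replicate n K @ lam = replicate p K @ K # replicate j K @ lam"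
      by (metis append.assoc append_Cons replicate_Suc replicate_add)
    moreover have "G_rec z \<beta> (replicate p K @ mu) (replicate p K @ K # replicate j K @ lam) = 0"
    proof (cases mu)
      case Nil
      then show ?thesis by (simp add: G_rec_eq_0_if_length)
    next
      case (Cons a mu')
      then show ?thesis using assms(1) G_rec_replicate_Cons[of a K z \<beta> p] by (cases mu') auto
    qed
    ultimately show ?thesis using 4 by simp
  qed
qed

lemma L_me_weights:
  fixes \<beta> v :: complex
  assumes "v \<noteq> 0" and "inverse v ^ 2 \<noteq> \<beta>"
  defines "x \<equiv> inverse v - \<beta> * v" and "z \<equiv> inverse (inverse v ^ 2 - \<beta>)"
  shows "x \<noteq> 0"
    and "inverse x * L_me \<beta> v 0 0 m n = (if m = n then if n = 0 then 1 else 1 + \<beta> * z else 0)"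
    and "L_me \<beta> v 0 1 m n = (if m = Suc n then 1 else 0)"
    and "inverse x ^ 2 * L_me \<beta> v 1 0 m n = (if n = Suc m then z * (1 + \<beta> * z) else 0)"
    and "inverse x * L_me \<beta> v 1 1 m n = (if m = n then z else 0)"
proof -
  have w: "inverse v ^ 2 - \<beta> \<noteq> 0" using assms(2) by simp
  have x: "x = v * (inverse v ^ 2 - \<beta>)"
    using assms(1) by (simp add: x_def algebra_simps power2_eq_square)
  show x_ne: "x \<noteq> 0" unfolding x using assms(1) w by simp
  have inv_v: "inverse x * inverse v = 1 + \<beta> * z" and v: "inverse x * v = z"
    using assms(1) w by (simp_all add: x z_def field_simps power2_eq_square)
  have "inverse x ^ 2 = (inverse x * v) * (inverse x * inverse v)"
    using assms(1) by (simp add: power2_eq_square)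
  then have sq: "inverse x ^ 2 = z * (1 + \<beta> * z)" unfolding inv_v v .
  show "inverse x * L_me \<beta> v 0 0 m n = (if m = n then if n = 0 then 1 else 1 + \<beta> * z else 0)"
    and "L_me \<beta> v 0 1 m n = (if m = Suc n then 1 else 0)"
    and "inverse x ^ 2 * L_me \<beta> v 1 0 m n = (if n = Suc m then z * (1 + \<beta> * z) else 0)"
    and "inverse x * L_me \<beta> v 1 1 m n = (if m = n then z else 0)"
    using x_ne inv_v v sq
    by (auto simp: L_me_def id_me_def pi_me_def phi_me_def phid_me_def x_def[symmetric] algebra_simps)
qed

lemma mono_me_eq_G_rec:
  fixes \<beta> v :: complex
  assumes "v \<noteq> 0" and "inverse v ^ 2 \<noteq> \<beta>" and "length ms = K" and "length ns = K"
  defines "x \<equiv> inverse v - \<beta> * v" and "z \<equiv> inverse (inverse v ^ 2 - \<beta>)"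
  shows "x powi (1 - int K) * mono_me \<beta> v ms ns K 0 1 = G_rec z \<beta> (partition_of ms) (partition_of ns)
    \<and> x powi (- int K) * mono_me \<beta> v ms ns K 1 1 = G_rec z \<beta> (K # partition_of ms) (partition_of ns)"
  using assms(3,4)
proof (induction ms arbitrary: K ns rule: rev_induct)
  case Nil
  then show ?case by simp
next
  case (snoc m ms)
  define K' where "K' = length ms"
  obtain ns' n where ns: "ns = ns' @ [n]" and len: "length ns' = K'"
    using snoc.prems by (cases ns rule: rev_exhaust) (auto simp: K'_def)
  have K: "K = Suc K'" using snoc.prems by (simp add: K'_def)
  define mu where "mu = partition_of ms"
  define lam where "lam = partition_of ns'"
  have mu_lt: "\<forall>a\<in>set mu. a < K'" and lam_lt: "\<forall>c\<in>set lam. c < K'"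
    using partition_of_less[of _ ms] partition_of_less[of _ ns'] len
    by (auto simp: mu_def lam_def K'_def)
  define q where "q = x powi (1 - int K')"
  define M0 where "M0 = mono_me \<beta> v ms ns' K' 0 1"
  define M1 where "M1 = mono_me \<beta> v ms ns' K' 1 1"
  have x_ne: "x \<noteq> 0" using L_me_weights(1)[OF assms(1,2), folded x_def] .
  have pow: "x powi (1 - int K) = inverse x * q" "x powi (- int K') = inverse x * q"
      "x powi (- int K) = inverse x ^ 2 * q"
    using x_ne by (simp_all add: K q_def power_int_diff power_int_minus power2_eq_square field_simps)
  have IH0: "q * M0 = G_rec z \<beta> mu lam" and IH1: "inverse x * q * M1 = G_rec z \<beta> (K' # mu) lam"
    using snoc.IH[of K' ns'] len pow(2) by (simp_all add: q_def M0_def M1_def mu_def lam_def K'_def)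
  have step: "mono_me \<beta> v (ms @ [m]) ns K a 1 = L_me \<beta> v a 0 m n * M0 + L_me \<beta> v a 1 m n * M1"
    for a unfolding ns K M0_def M1_def using len by (subst mono_me_snoc) (simp_all add: K'_def)
  have partitions: "partition_of (ms @ [m]) = replicate m K' @ mu"
      "partition_of ns = replicate n K' @ lam"
    using len by (simp_all add: ns partition_of_snoc mu_def lam_def K'_def)
  note weights = L_me_weights(2-5)[OF assms(1,2), of m n, folded x_def z_def]
  have "x powi (1 - int K) * mono_me \<beta> v (ms @ [m]) ns K 0 1
      = (inverse x * L_me \<beta> v 0 0 m n) * (q * M0) + L_me \<beta> v 0 1 m n * (inverse x * q * M1)"
    unfolding pow step by (simp add: algebra_simps)
  also have "\<dots> = (if m = n then (if n = 0 then 1 else 1 + \<beta> * z) * G_rec z \<beta> mu lam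
      else if m = Suc n then G_rec z \<beta> (K' # mu) lam else 0)"
    unfolding weights IH0 IH1 by simp
  also have "\<dots> = G_rec z \<beta> (partition_of (ms @ [m])) (partition_of ns)"
    unfolding partitions G_rec_replicate[OF mu_lt lam_lt] ..
  finally have B: "x powi (1 - int K) * mono_me \<beta> v (ms @ [m]) ns K 0 1
      = G_rec z \<beta> (partition_of (ms @ [m])) (partition_of ns)" .
  have "x powi (- int K) * mono_me \<beta> v (ms @ [m]) ns K 1 1
      = (inverse x ^ 2 * L_me \<beta> v 1 0 m n) * (q * M0)
        + (inverse x * L_me \<beta> v 1 1 m n) * (inverse x * q * M1)"
    unfolding pow step by (simp add: power2_eq_square algebra_simps)
  also have "\<dots> = z * (if Suc m = n then (1 + \<beta> * z) * G_rec z \<beta> mu lam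
      else if Suc m = Suc n then G_rec z \<beta> (K' # mu) lam else 0)"
    unfolding weights IH0 IH1 by auto
  also have "\<dots> = z * G_rec z \<beta> (replicate (Suc m) K' @ mu) (replicate n K' @ lam)"
    unfolding G_rec_replicate[OF mu_lt lam_lt] by simp
  also have "\<dots> = G_rec z \<beta> (K # partition_of (ms @ [m])) (partition_of ns)"
    unfolding partitions K using lam_lt
    by (subst G_rec_Suc_Cons) (cases n; cases lam; auto)+
  finally show ?case using B by simp
qed

theorem mainTheorem7:
  fixes \<beta> v :: complex and M N :: nat and ms ns :: "nat list"
  assumes "M \<ge> 1"
    and "length ms = M" and "length ns = M"
    and "sum_list ms = N + 1" and "sum_list ns = N"
    and "v \<noteq> 0" and "inverse v ^ 2 \<noteq> \<beta>"
  shows "(inverse v - \<beta> * v) powi (1 - int M) * B_me \<beta> v ms ns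
           = G_skew (partition_of ms) (partition_of ns) (inverse (inverse v ^ 2 - \<beta>)) \<beta>
       \<and> (inverse v - \<beta> * v) powi (1 - int M) * C_me \<beta> v ns ms
           = G_skew (dual_part M (partition_of ms)) (dual_part M (partition_of ns))
               (inverse (inverse v ^ 2 - \<beta>)) \<beta>"
proof -
  let ?z = "inverse (inverse v ^ 2 - \<beta>)"
  have z_ne: "?z \<noteq> 0" using assms(7) by simp
  have G_skew_partitions: "G_skew (partition_of xs) (partition_of ys) ?z \<beta>
      = G_rec ?z \<beta> (partition_of xs) (partition_of ys)"
    if "sum_list xs = N + 1" and "sum_list ys = N" for xs ys
    using that by (intro G_skew_eq_G_rec z_ne) (simp add: length_partition_of)
  have "C_me \<beta> v ns ms = B_me \<beta> v (rev ms) (rev ns)"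
    using assms(2,3) by (simp add: C_me_eq_B_me_rev)
  moreover have "dual_part M (partition_of xs) = partition_of (rev xs)" if "length xs = M" for xs
    using that dual_part_partition_of by blast
  ultimately show ?thesis
    using mono_me_eq_G_rec[OF assms(6,7), of ms M ns] mono_me_eq_G_rec[OF assms(6,7), of "rev ms" M "rev ns"]
      G_skew_partitions[OF assms(4,5)] G_skew_partitions[of "rev ms" "rev ns"] assms(2-5)
    by (simp add: B_me_def)
qed

end
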